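(* Let $F:\mathbb{R}^d\to\mathbb{R}^d$ be $L$-Lipschitz, let $G:\mathbb{R}^d\rightrightarrows\mathbb{R}^d$ be maximally monotone, and assume the problem of finding $x$ with $0\in F(x)+G(x)$ has a nonempty solution set. Assume $F+G$ is maximally $\rho$-cohypomonotone for some $\rho>0$. Let $\eta<\frac{1}{L}$ and suppose $\rho<\eta$. Let $(x_k)$ be generated by the inexact Halpern iteration described in the context, and let $x^\star$ be a solution. Then for any $k=1,\dots,K$, $$\frac{1}{\eta^2}\|x_k-J_{\eta(F+G)}(x_k)\|^2\le\frac{16\|x_0-x^\star\|^2}{(\eta-\rho)^2(k+1)^2}.$$ Moreover, the number of first-order oracle calls used at iteration $k$ is at most $2N_k$, where $N_k=\left\lceil\frac{4(1+\eta L)}{1-\eta L}\log\big(98\sqrt{k+2}\,\log(k+2)\big)\right\rceil$.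
   Context: For an operator $A$, $J_A=(\mathrm{Id}+A)^{-1}$ denotes its resolvent. $F+G$ is $\rho$-cohypomonotone if $\langle u-v,x-y\rangle\ge-\rho\|u-v\|^2$ for all $(x,u),(y,v)$ in the graph of $F+G$; maximal means its graph is not strictly contained in the graph of another $\rho$-cohypomonotone operator. A first-order oracle call consists of one evaluation of $F$ and one resolvent evaluation of (a positive multiple of) $G$. Subroutine FBF$(z_0,N,A,B_{\mathrm{in}},L_B)$: set $\tau=\frac{1}{2L_B}$ and $B(\cdot)=B_{\mathrm{in}}(\cdot)-z_0$; for $t=0,\dots,N-1$: $z_{t+1/2}=J_{\tau A}(z_t-\tau B(z_t))$, $z_{t+1}=z_{t+1/2}+\tau B(z_t)-\tau B(z_{t+1/2})$; output $z_N$. Inexact Halpern iteration: given $x_0\in\mathbb{R}^d$, $K\ge1$, set $\beta_k=\frac{1}{k+2}$, $\alpha=1-\frac{\rho}{\eta}$. For $k=0,\dots,K-1$: $\widetilde J_{\eta(F+G)}(x_k)=\mathrm{FBF}(x_k,N_k,\eta G,\mathrm{Id}+\eta F,1+\eta L)$ with $N_k=\left\lceil\frac{4(1+\eta L)}{1-\eta L}\log(98\sqrt{k+2}\log(k+2))\right\rceil$, and $x_{k+1}=\beta_kx_0+(1-\beta_k)\big((1-\alpha)x_k+\alpha\widetilde J_{\eta(F+G)}(x_k)\big)$. *)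

theory Defs
  imports "HOL-Analysis.Analysis"
begin

definition op_graph :: "('a \<Rightarrow> 'a set) \<Rightarrow> ('a \<times> 'a) set" where
  "op_graph A = {(x, u). u \<in> A x}"

definition op_sum :: "('a::real_vector \<Rightarrow> 'a) \<Rightarrow> ('a \<Rightarrow> 'a set) \<Rightarrow> 'a \<Rightarrow> 'a set" where
  "op_sum F G = (\<lambda>x. (\<lambda>v. F x + v) ` G x)"

definition op_scale :: "real \<Rightarrow> ('a::real_vector \<Rightarrow> 'a set) \<Rightarrow> 'a \<Rightarrow> 'a set" where
  "op_scale c A = (\<lambda>x. (\<lambda>v. c *\<^sub>R v) ` A x)"

text \<open>Resolvent J_A = (Id + A)^{-1}, as a function: J_A x is the z with x \<in> z + A z.\<close>
definition resolvent :: "('a::real_vector \<Rightarrow> 'a set) \<Rightarrow> 'a \<Rightarrow> 'a" where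
  "resolvent A x = (THE z. x - z \<in> A z)"

definition monotone_op :: "('a::real_inner \<Rightarrow> 'a set) \<Rightarrow> bool" where
  "monotone_op A \<longleftrightarrow>
     (\<forall>x u y v. (x, u) \<in> op_graph A \<longrightarrow> (y, v) \<in> op_graph A \<longrightarrow> inner (u - v) (x - y) \<ge> 0)"

definition maximal_monotone :: "('a::real_inner \<Rightarrow> 'a set) \<Rightarrow> bool" where
  "maximal_monotone A \<longleftrightarrow> monotone_op A \<and>
     (\<forall>B. monotone_op B \<and> op_graph A \<subseteq> op_graph B \<longrightarrow> op_graph B = op_graph A)"

definition cohypomonotone :: "real \<Rightarrow> ('a::real_inner \<Rightarrow> 'a set) \<Rightarrow> bool" where
  "cohypomonotone \<rho> A \<longleftrightarrow>
     (\<forall>x u y v. (x, u) \<in> op_graph A \<longrightarrow> (y, v) \<in> op_graph A \<longrightarrow>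
        inner (u - v) (x - y) \<ge> - \<rho> * (norm (u - v))\<^sup>2)"

definition maximal_cohypomonotone :: "real \<Rightarrow> ('a::real_inner \<Rightarrow> 'a set) \<Rightarrow> bool" where
  "maximal_cohypomonotone \<rho> A \<longleftrightarrow> cohypomonotone \<rho> A \<and>
     (\<forall>B. cohypomonotone \<rho> B \<and> op_graph A \<subseteq> op_graph B \<longrightarrow> op_graph B = op_graph A)"

text \<open>One FBF step, instrumented with counters (number of evaluations of B_in,
  i.e. of F, and number of resolvent evaluations).  State: (z_t, #F, #J).\<close>
definition fbf_step ::
  "('a::real_vector \<Rightarrow> 'a set) \<Rightarrow> ('a \<Rightarrow> 'a) \<Rightarrow> real \<Rightarrow> 'a \<Rightarrow> 'a \<times> nat \<times> nat \<Rightarrow> 'a \<times> nat \<times> nat" where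
  "fbf_step A Bin LB z0 s =
     (let \<tau> = 1 / (2 * LB);
          B = (\<lambda>w. Bin w - z0);
          (z, nF, nJ) = s;
          Bz = B z;                                  \<comment> \<open>one evaluation of B_in\<close>
          zh = resolvent (op_scale \<tau> A) (z - \<tau> *\<^sub>R Bz);  \<comment> \<open>one resolvent evaluation\<close>
          Bzh = B zh                                 \<comment> \<open>one evaluation of B_in\<close>
      in (zh + \<tau> *\<^sub>R Bz - \<tau> *\<^sub>R Bzh, nF + 2, nJ + 1))"

definition fbf ::
  "'a::real_vector \<Rightarrow> nat \<Rightarrow> ('a \<Rightarrow> 'a set) \<Rightarrow> ('a \<Rightarrow> 'a) \<Rightarrow> real \<Rightarrow> 'a \<times> nat \<times> nat" where
  "fbf z0 N A Bin LB = (fbf_step A Bin LB z0 ^^ N) (z0, 0, 0)"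

definition halpern_N :: "real \<Rightarrow> real \<Rightarrow> nat \<Rightarrow> nat" where
  "halpern_N L \<eta> k =
     nat \<lceil>4 * (1 + \<eta> * L) / (1 - \<eta> * L) * ln (98 * sqrt (real k + 2) * ln (real k + 2))\<rceil>"

definition inexact_resolvent ::
  "('a::real_vector \<Rightarrow> 'a) \<Rightarrow> ('a \<Rightarrow> 'a set) \<Rightarrow> real \<Rightarrow> real \<Rightarrow> nat \<Rightarrow> 'a \<Rightarrow> 'a \<times> nat \<times> nat" where
  "inexact_resolvent F G L \<eta> k x =
     fbf x (halpern_N L \<eta> k) (op_scale \<eta> G) (\<lambda>z. z + \<eta> *\<^sub>R F z) (1 + \<eta> * L)"

primrec halpern ::
  "('a::real_vector \<Rightarrow> 'a) \<Rightarrow> ('a \<Rightarrow> 'a set) \<Rightarrow> real \<Rightarrow> real \<Rightarrow> real \<Rightarrow> 'a \<Rightarrow> nat \<Rightarrow> 'a" where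
  "halpern F G L \<eta> \<rho> x0 0 = x0"
| "halpern F G L \<eta> \<rho> x0 (Suc k) =
     (let \<beta> = 1 / (real k + 2);
          \<alpha> = 1 - \<rho> / \<eta>;
          xk = halpern F G L \<eta> \<rho> x0 k;
          Jt = fst (inexact_resolvent F G L \<eta> k xk)
      in \<beta> *\<^sub>R x0 + (1 - \<beta>) *\<^sub>R ((1 - \<alpha>) *\<^sub>R xk + \<alpha> *\<^sub>R Jt))"

end

theory Submission
  imports Defs
begin

(* The exact resolvent J of eta(F + G) is the fixed point of the contraction
   z |-> J_{eta G}(x - eta F z), where J_{eta G} exists by Minty's theorem (which follows from
   Brouwer's fixed point theorem by a finite intersection argument).  Since rho < eta,
   cohypomonotonicity makes g = (1 - rho/eta)(Id - J) firmly nonexpansive with g x* = 0.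
   Tseng's FBF method for the strongly monotone, Lipschitz operator Id + eta F converges linearly
   to J x, so N_k steps compute J x_k up to the relative error 1/(98 sqrt(k+2) log(k+2)).
   The Halpern potential k(k+1)|g x_k|^2 + 2(k+1)<g x_k, x_k - x0> then increases at most by
   summable amounts, which forces (k+1)|g x_k| <= 4|x0 - x*|. *)

section \<open>Monotone and cohypomonotone operators\<close>

lemma op_scale_mem: "y \<in> op_scale c A z \<longleftrightarrow> (\<exists>v\<in>A z. y = c *\<^sub>R v)"
  by (auto simp: op_scale_def)

lemma op_sum_mem: "y \<in> op_sum F G z \<longleftrightarrow> (\<exists>v\<in>G z. y = F z + v)"
  by (auto simp: op_sum_def)

lemma monotone_opD:
  "monotone_op A \<Longrightarrow> u \<in> A x \<Longrightarrow> v \<in> A y \<Longrightarrow> 0 \<le> inner (u - v) (x - y)"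
  by (auto simp: monotone_op_def op_graph_def)

lemma cohypomonotoneD:
  "cohypomonotone \<rho> A \<Longrightarrow> u \<in> A x \<Longrightarrow> v \<in> A y \<Longrightarrow>
    - \<rho> * (norm (u - v))\<^sup>2 \<le> inner (u - v) (x - y)"
  by (auto simp: cohypomonotone_def op_graph_def)

lemma monotone_imp_cohypomonotone_0: "monotone_op A \<Longrightarrow> cohypomonotone 0 A"
  by (auto simp: monotone_op_def cohypomonotone_def)

lemma maximal_monotone_imp_monotone: "maximal_monotone A \<Longrightarrow> monotone_op A"
  by (simp add: maximal_monotone_def)

lemma maximal_monotone_memI:
  assumes mm: "maximal_monotone A"
    and rel: "\<And>y v. v \<in> A y \<Longrightarrow> 0 \<le> inner (u - v) (x - y)"
  shows "u \<in> A x"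
proof -
  define B where "B = A(x := insert u (A x))"
  have graph_B: "op_graph B = insert (x, u) (op_graph A)"
    by (auto simp: op_graph_def B_def split: if_splits)
  have rel': "0 \<le> inner (v - u) (y - x)" if "v \<in> A y" for y v
    using rel[OF that] by (simp add: inner_diff_left inner_diff_right)
  have "monotone_op B"
    using maximal_monotone_imp_monotone[OF mm] rel rel'
    unfolding monotone_op_def graph_B by (auto simp: op_graph_def)
  then have "op_graph B = op_graph A"
    using mm graph_B unfolding maximal_monotone_def by blast
  then show ?thesis
    using graph_B by (auto simp: op_graph_def)
qed

lemma maximal_monotone_op_scale:
  assumes mm: "maximal_monotone A" and c: "c > 0"
  shows "maximal_monotone (op_scale c A)"
proof -
  have mono: "monotone_op (op_scale c A)"
    using monotone_opD[OF maximal_monotone_imp_monotone[OF mm]] c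
    by (auto simp: monotone_op_def op_graph_def op_scale_mem simp flip: scaleR_diff_right)
  have "op_graph B = op_graph (op_scale c A)"
    if B: "monotone_op B" "op_graph (op_scale c A) \<subseteq> op_graph B" for B
  proof -
    have "monotone_op (op_scale (1 / c) B)"
      using B(1) c
      by (auto simp: monotone_op_def op_graph_def op_scale_mem simp flip: scaleR_diff_right)
    moreover have "op_graph A \<subseteq> op_graph (op_scale (1 / c) B)"
    proof (clarsimp simp: op_graph_def op_scale_mem)
      fix x u assume "u \<in> A x"
      then have "c *\<^sub>R u \<in> B x"
        using B(2) by (auto simp: op_graph_def op_scale_mem)
      then show "\<exists>v\<in>B x. u = (1 / c) *\<^sub>R v"
        using c by (intro bexI[of _ "c *\<^sub>R u"]) auto
    qed
    ultimately have graph_A: "op_graph (op_scale (1 / c) B) = op_graph A"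
      using mm unfolding maximal_monotone_def by blast
    have "op_graph B \<subseteq> op_graph (op_scale c A)"
    proof (clarsimp simp: op_graph_def op_scale_mem)
      fix x w assume "w \<in> B x"
      then have "(1 / c) *\<^sub>R w \<in> A x"
        using graph_A by (auto simp: op_graph_def op_scale_mem)
      then show "\<exists>u\<in>A x. w = c *\<^sub>R u"
        using c by (intro bexI[of _ "(1 / c) *\<^sub>R w"]) auto
    qed
    with B(2) show ?thesis by blast
  qed
  with mono show ?thesis
    unfolding maximal_monotone_def by blast
qed

lemma id_plus_lipschitz_strongly_monotone:
  fixes F :: "'a::real_inner \<Rightarrow> 'a"
  assumes lip: "L-lipschitz_on UNIV F" and \<eta>: "\<eta> \<ge> 0"
  shows "(1 - \<eta> * L) * (norm (a - b))\<^sup>2 \<le> inner ((a + \<eta> *\<^sub>R F a) - (b + \<eta> *\<^sub>R F b)) (a - b)"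
proof -
  have "- inner (F a - F b) (a - b) \<le> norm (F a - F b) * norm (a - b)"
    using Cauchy_Schwarz_ineq2[of "F a - F b" "a - b"] by linarith
  also have "\<dots> \<le> (L * norm (a - b)) * norm (a - b)"
    using lipschitz_on_normD[OF lip] by (intro mult_right_mono) auto
  finally have "\<eta> * (- L * (norm (a - b))\<^sup>2) \<le> \<eta> * inner (F a - F b) (a - b)"
    using \<eta> by (intro mult_left_mono) (auto simp: power2_eq_square)
  moreover have "inner ((a + \<eta> *\<^sub>R F a) - (b + \<eta> *\<^sub>R F b)) (a - b)
      = (norm (a - b))\<^sup>2 + \<eta> * inner (F a - F b) (a - b)"
    by (simp add: power2_norm_eq_inner algebra_simps inner_diff_left inner_add_left
        flip: scaleR_diff_right)
  ultimately show ?thesis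
    by (simp add: algebra_simps)
qed

section \<open>Minty's theorem\<close>

lemma monotone_pairs_weighted_sum_nonneg:
  fixes M :: "('a::real_inner \<times> 'a) set" and l :: "'a \<times> 'a \<Rightarrow> real"
  assumes mono: "\<And>p q. p \<in> M \<Longrightarrow> q \<in> M \<Longrightarrow> 0 \<le> inner (snd p - snd q) (fst p - fst q)"
    and l_nonneg: "\<And>p. p \<in> M \<Longrightarrow> 0 \<le> l p"
  shows "0 \<le> (\<Sum>p\<in>M. \<Sum>q\<in>M. l p * l q * inner (snd p) (fst p - fst q))"
proof -
  define Q where "Q = (\<Sum>p\<in>M. \<Sum>q\<in>M. l p * l q * inner (snd p) (fst p - fst q))"
  have Q_swap: "Q = (\<Sum>p\<in>M. \<Sum>q\<in>M. l p * l q * inner (snd q) (fst q - fst p))"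
    unfolding Q_def by (subst sum.swap) (simp add: mult.commute)
  have "2 * Q = (\<Sum>p\<in>M. \<Sum>q\<in>M. l p * l q * inner (snd p) (fst p - fst q))
      + (\<Sum>p\<in>M. \<Sum>q\<in>M. l p * l q * inner (snd q) (fst q - fst p))"
    using Q_swap unfolding Q_def by simp
  also have "\<dots> = (\<Sum>p\<in>M. \<Sum>q\<in>M. l p * l q * inner (snd p - snd q) (fst p - fst q))"
    by (simp add: sum.distrib[symmetric] algebra_simps inner_diff_left inner_diff_right)
  also have "\<dots> \<ge> 0"
    by (intro sum_nonneg mult_nonneg_nonneg l_nonneg mono)
  finally show ?thesis unfolding Q_def by simp
qed

lemma brouwer_weighted_average_fixpoint:
  fixes a :: "'i \<Rightarrow> 'a::euclidean_space" and \<gamma> :: "'i \<Rightarrow> 'a \<Rightarrow> real"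
  assumes fin: "finite I"
    and cont: "\<And>i. continuous_on UNIV (\<gamma> i)"
    and nonneg: "\<And>i x. 0 \<le> \<gamma> i x"
    and pos: "\<And>x. 0 < (\<Sum>i\<in>I. \<gamma> i x)"
  shows "\<exists>x. x = (\<Sum>i\<in>I. (\<gamma> i x / (\<Sum>j\<in>I. \<gamma> j x)) *\<^sub>R a i)"
proof -
  define S where "S x = (\<Sum>j\<in>I. \<gamma> j x)" for x
  define f where "f x = (\<Sum>i\<in>I. (\<gamma> i x / S x) *\<^sub>R a i)" for x
  define C where "C = convex hull (a ` I)"
  have "continuous_on UNIV S"
    unfolding S_def by (intro continuous_intros cont)
  then have "continuous_on C f"
    unfolding f_def using pos unfolding S_def[symmetric]
    by (intro continuous_intros continuous_on_subset[OF cont])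
       (auto intro: continuous_on_subset dest: less_imp_neq[symmetric])
  moreover have "f \<in> C \<rightarrow> C"
  proof
    fix x
    have "(\<Sum>i\<in>I. \<gamma> i x / S x) = 1"
      using pos[of x] unfolding S_def by (simp add: sum_divide_distrib[symmetric])
    then show "f x \<in> C"
      unfolding f_def C_def using pos[of x] nonneg
      by (intro convex_sum[OF fin convex_convex_hull]) (auto simp: S_def hull_inc)
  qed
  moreover have "I \<noteq> {}"
    using pos[of 0] by auto
  then have "compact C" "convex C" "C \<noteq> {}"
    using fin unfolding C_def by (auto simp: compact_convex_hull finite_imp_compact)
  ultimately obtain x where "f x = x"
    using brouwer by blast
  then show ?thesis
    unfolding f_def S_def by metis
qed

lemma monotone_weighted_average_nonneg:
  fixes M :: "('a::real_inner \<times> 'a) set"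
  assumes mono: "\<And>p q. p \<in> M \<Longrightarrow> q \<in> M \<Longrightarrow> 0 \<le> inner (snd p - snd q) (fst p - fst q)"
    and l_nonneg: "\<And>p. p \<in> M \<Longrightarrow> 0 \<le> l p" and l_sum: "(\<Sum>p\<in>M. l p) = 1"
    and x: "x = (\<Sum>q\<in>M. l q *\<^sub>R fst q)" and c: "c \<ge> 0"
  shows "0 \<le> (\<Sum>p\<in>M. l p * inner (c *\<^sub>R snd p + x - w) (fst p - x))"
proof -
  have centered: "fst p - x = (\<Sum>q\<in>M. l q *\<^sub>R (fst p - fst q))" for p
    by (simp add: scaleR_diff_right sum_subtractf x[symmetric] l_sum flip: scaleR_sum_left)
  have "(\<Sum>p\<in>M. l p * inner (x - w) (fst p - x)) = inner (x - w) (\<Sum>p\<in>M. l p *\<^sub>R (fst p - x))"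
    by (simp add: inner_sum_right)
  also have "(\<Sum>p\<in>M. l p *\<^sub>R (fst p - x)) = 0"
    by (simp add: scaleR_diff_right sum_subtractf x[symmetric] l_sum flip: scaleR_sum_left)
  finally have centered_term: "(\<Sum>p\<in>M. l p * inner (x - w) (fst p - x)) = 0"
    by simp
  have double_sum: "(\<Sum>p\<in>M. l p * inner (snd p) (fst p - x))
      = (\<Sum>p\<in>M. \<Sum>q\<in>M. l p * l q * inner (snd p) (fst p - fst q))"
    by (subst centered) (simp add: inner_sum_right sum_distrib_left mult.assoc)
  have "l p * inner (c *\<^sub>R snd p + x - w) (fst p - x)
      = c * (l p * inner (snd p) (fst p - x)) + l p * inner (x - w) (fst p - x)" for p
    by (simp add: inner_add_left inner_diff_left algebra_simps)
  then have "(\<Sum>p\<in>M. l p * inner (c *\<^sub>R snd p + x - w) (fst p - x))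
      = c * (\<Sum>p\<in>M. l p * inner (snd p) (fst p - x)) + (\<Sum>p\<in>M. l p * inner (x - w) (fst p - x))"
    by (simp add: sum.distrib sum_distrib_left)
  also have "\<dots> \<ge> 0"
    unfolding centered_term double_sum
    using monotone_pairs_weighted_sum_nonneg[OF mono l_nonneg] c by simp
  finally show ?thesis .
qed

lemma sum_negative_part_weighted_neg:
  fixes \<phi> :: "'p \<Rightarrow> real"
  assumes fin: "finite M" and p: "p \<in> M" "\<phi> p < 0"
  shows "(\<Sum>q\<in>M. max 0 (- \<phi> q) * \<phi> q) < 0"
proof -
  have "0 < (max 0 (- \<phi> p))\<^sup>2"
    using p by simp
  also have "\<dots> \<le> (\<Sum>q\<in>M. (max 0 (- \<phi> q))\<^sup>2)"
    using fin p(1) by (intro member_le_sum) auto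
  also have "\<dots> = - (\<Sum>q\<in>M. max 0 (- \<phi> q) * \<phi> q)"
  proof -
    have "(max 0 (- \<phi> q))\<^sup>2 = - (max 0 (- \<phi> q) * \<phi> q)" for q
      by (auto simp: max_def power2_eq_square)
    then show ?thesis
      by (simp add: sum_negf)
  qed
  finally show ?thesis
    by simp
qed

text \<open>If no solution existed, weighting the points fst p by the violations of the inequalities
  would give a continuous map with a Brouwer fixed point x; averaging the inequalities at x with
  these weights gives a quantity that is negative, yet nonnegative by monotonicity.\<close>

lemma finite_monotone_variational_inequality:
  fixes M :: "('a::euclidean_space \<times> 'a) set"
  assumes fin: "finite M"
    and mono: "\<And>p q. p \<in> M \<Longrightarrow> q \<in> M \<Longrightarrow> 0 \<le> inner (snd p - snd q) (fst p - fst q)"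
    and c: "c \<ge> 0"
  shows "\<exists>x. \<forall>p\<in>M. 0 \<le> inner (c *\<^sub>R snd p + x - w) (fst p - x)"
proof (rule ccontr)
  assume neg: "\<not> ?thesis"
  define \<phi> where "\<phi> p x = inner (c *\<^sub>R snd p + x - w) (fst p - x)" for p x
  define \<gamma> where "\<gamma> p x = max 0 (- \<phi> p x)" for p x
  have violated: "\<exists>p\<in>M. \<phi> p x < 0" for x
    using neg unfolding \<phi>_def by (auto simp: not_le)
  have \<gamma>_nonneg: "0 \<le> \<gamma> p x" for p x
    unfolding \<gamma>_def by simp
  have \<gamma>_sum_pos: "0 < (\<Sum>p\<in>M. \<gamma> p x)" for x
  proof -
    obtain p where "p \<in> M" "\<phi> p x < 0"
      using violated by blast
    then show ?thesis
      using fin \<gamma>_nonneg by (intro sum_pos2[where i = p]) (auto simp: \<gamma>_def)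
  qed
  have \<gamma>_cont: "continuous_on UNIV (\<gamma> p)" for p
    unfolding \<gamma>_def \<phi>_def by (intro continuous_intros)
  obtain x where x: "x = (\<Sum>p\<in>M. (\<gamma> p x / (\<Sum>q\<in>M. \<gamma> q x)) *\<^sub>R fst p)"
    using brouwer_weighted_average_fixpoint[OF fin \<gamma>_cont \<gamma>_nonneg \<gamma>_sum_pos] by blast
  define S where "S = (\<Sum>q\<in>M. \<gamma> q x)"
  have S: "S > 0"
    unfolding S_def by (rule \<gamma>_sum_pos)
  obtain p where "p \<in> M" "\<phi> p x < 0"
    using violated by blast
  with fin have "(\<Sum>p\<in>M. \<gamma> p x * \<phi> p x) < 0"
    unfolding \<gamma>_def by (rule sum_negative_part_weighted_neg)
  then have "(\<Sum>p\<in>M. \<gamma> p x / S * \<phi> p x) < 0"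
    using S by (simp add: sum_divide_distrib[symmetric] divide_neg_pos)
  moreover have "0 \<le> (\<Sum>p\<in>M. \<gamma> p x / S * \<phi> p x)"
    unfolding \<phi>_def
  proof (rule monotone_weighted_average_nonneg[OF mono _ _ _ c])
    show "0 \<le> \<gamma> p x / S" for p
      using \<gamma>_nonneg S by simp
    show "(\<Sum>p\<in>M. \<gamma> p x / S) = 1"
      using S unfolding S_def by (simp add: sum_divide_distrib[symmetric])
    show "x = (\<Sum>q\<in>M. (\<gamma> q x / S) *\<^sub>R fst q)"
      using x unfolding S_def .
  qed
  ultimately show False
    by simp
qed

lemma norm_le_if_inner_nonneg:
  fixes x :: "'a::real_inner"
  assumes "0 \<le> inner (a + x) (y - x)"
  shows "norm x \<le> norm a * norm y + norm a + norm y + 1"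
proof (rule ccontr)
  define M where "M = norm a * norm y + norm a + norm y"
  assume "\<not> ?thesis"
  then have gt: "norm x > M + 1" unfolding M_def by simp
  have "norm x * norm x = inner x x"
    by (simp add: dot_square_norm power2_eq_square)
  also have "\<dots> \<le> inner a y - inner a x + inner x y"
    using assms by (simp add: inner_add_left inner_diff_right inner_commute algebra_simps)
  also have "\<dots> \<le> norm a * norm y + norm a * norm x + norm x * norm y"
    using Cauchy_Schwarz_ineq2[of a y] Cauchy_Schwarz_ineq2[of a x] Cauchy_Schwarz_ineq2[of x y]
    by (smt (verit) abs_le_iff)
  also have "\<dots> \<le> M + M * norm x"
    unfolding M_def by (simp add: algebra_simps)
  finally have "norm x * norm x \<le> M + M * norm x" .
  moreover have "M \<ge> 0"
    unfolding M_def by simp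
  moreover have "(M + 1) * norm x < norm x * norm x"
    using gt \<open>M \<ge> 0\<close> by (intro mult_strict_right_mono) auto
  ultimately show False
    using gt by (smt (verit) distrib_right mult_cancel_right1 mult_le_cancel_left1)
qed

lemma monotone_variational_inequality:
  fixes A :: "'a::euclidean_space \<Rightarrow> 'a set"
  assumes mono: "monotone_op A" and c: "c \<ge> 0"
  shows "\<exists>x. \<forall>(y, v)\<in>op_graph A. 0 \<le> inner (c *\<^sub>R v + x - w) (y - x)"
proof (cases "op_graph A = {}")
  case False
  then obtain p0 where p0: "p0 \<in> op_graph A" by blast
  define K where "K p = {x. 0 \<le> inner (c *\<^sub>R snd p + x - w) (fst p - x)}" for p :: "'a \<times> 'a"
  define R where "R = norm (c *\<^sub>R snd p0 - w) * norm (fst p0) + norm (c *\<^sub>R snd p0 - w) + norm (fst p0) + 1"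
  have mono_pairs: "0 \<le> inner (snd p - snd q) (fst p - fst q)"
    if "p \<in> op_graph A" "q \<in> op_graph A" for p q
    using mono that unfolding monotone_op_def by (cases p, cases q) auto
  have K_bounded: "K p0 \<subseteq> cball 0 R"
  proof
    fix x assume "x \<in> K p0"
    then have "0 \<le> inner ((c *\<^sub>R snd p0 - w) + x) (fst p0 - x)"
      unfolding K_def by (simp add: algebra_simps)
    from norm_le_if_inner_nonneg[OF this] show "x \<in> cball 0 R"
      unfolding R_def by simp
  qed
  have "cball 0 R \<inter> (\<Inter>p\<in>op_graph A. K p) \<noteq> {}"
  proof (rule compact_imp_fip_image)
    show "closed (K p)" for p
      unfolding K_def by (intro closed_Collect_le continuous_intros)
    fix I assume I: "finite I" "I \<subseteq> op_graph A"
    obtain x where x: "\<forall>p\<in>insert p0 I. x \<in> K p"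
      using finite_monotone_variational_inequality[of "insert p0 I" c w] I p0 mono_pairs c
      unfolding K_def by blast
    then show "cball 0 R \<inter> (\<Inter>p\<in>I. K p) \<noteq> {}"
      using K_bounded by blast
  qed simp
  then show ?thesis
    unfolding K_def by fastforce
qed simp

lemma minty_surjectivity:
  fixes A :: "'a::euclidean_space \<Rightarrow> 'a set"
  assumes mm: "maximal_monotone A" and c: "c > 0"
  shows "\<exists>z. w - z \<in> op_scale c A z"
proof -
  obtain x where x: "\<forall>(y, v)\<in>op_graph A. 0 \<le> inner (c *\<^sub>R v + x - w) (y - x)"
    using monotone_variational_inequality[OF maximal_monotone_imp_monotone[OF mm]] c
    by (meson less_imp_le)
  define u where "u = (1 / c) *\<^sub>R (w - x)"
  have cu: "c *\<^sub>R u = w - x"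
    unfolding u_def using c by simp
  have "u \<in> A x"
  proof (rule maximal_monotone_memI[OF mm])
    fix y v assume "v \<in> A y"
    then have "0 \<le> inner (c *\<^sub>R v + x - w) (y - x)"
      using x by (auto simp: op_graph_def)
    also have "c *\<^sub>R v + x - w = c *\<^sub>R (v - u)"
      using cu by (simp add: algebra_simps)
    finally have "0 \<le> inner (v - u) (y - x)"
      using c by (simp add: zero_le_mult_iff)
    then show "0 \<le> inner (u - v) (x - y)"
      by (simp add: inner_diff_left inner_diff_right)
  qed
  then show ?thesis
    using cu unfolding op_scale_mem by (intro exI[of _ x] bexI[of _ u]) auto
qed

section \<open>Resolvents\<close>

lemma cohypomonotone_resolvent_eqI:
  assumes coh: "cohypomonotone \<rho> A" and \<rho>_\<eta>: "\<rho> < \<eta>"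
    and z: "x - z \<in> op_scale \<eta> A z"
  shows "resolvent (op_scale \<eta> A) x = z"
  unfolding resolvent_def
proof (rule the_equality)
  fix z' assume z': "x - z' \<in> op_scale \<eta> A z'"
  obtain u where u: "u \<in> A z" "x - z = \<eta> *\<^sub>R u"
    using z by (auto simp: op_scale_mem)
  obtain u' where u': "u' \<in> A z'" "x - z' = \<eta> *\<^sub>R u'"
    using z' by (auto simp: op_scale_mem)
  have "- \<rho> * (norm (u' - u))\<^sup>2 \<le> inner (u' - u) (z' - z)"
    using cohypomonotoneD[OF coh u'(1) u(1)] .
  also have "z' - z = - \<eta> *\<^sub>R (u' - u)"
    using u u' by (simp add: algebra_simps)
  finally have "- \<rho> * (norm (u' - u))\<^sup>2 \<le> - \<eta> * (norm (u' - u))\<^sup>2"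
    by (simp add: dot_square_norm)
  then have "(\<eta> - \<rho>) * (norm (u' - u))\<^sup>2 \<le> 0"
    by (simp add: algebra_simps)
  then have "u' = u"
    using \<rho>_\<eta> by (simp add: mult_le_0_iff)
  then show "z' = z"
    using u u' by (simp add: algebra_simps)
qed (fact z)

lemma maximal_monotone_resolvent_mem:
  fixes A :: "'a::euclidean_space \<Rightarrow> 'a set"
  assumes mm: "maximal_monotone A" and c: "c > 0"
  shows "w - resolvent (op_scale c A) w \<in> op_scale c A (resolvent (op_scale c A) w)"
proof -
  obtain z where z: "w - z \<in> op_scale c A z"
    using minty_surjectivity[OF mm c] by blast
  have "resolvent (op_scale c A) w = z"
    using monotone_imp_cohypomonotone_0[OF maximal_monotone_imp_monotone[OF mm]] c z
    by (rule cohypomonotone_resolvent_eqI)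
  then show ?thesis
    using z by simp
qed

lemma maximal_monotone_resolvent_nonexpansive:
  fixes A :: "'a::euclidean_space \<Rightarrow> 'a set"
  assumes mm: "maximal_monotone A" and c: "c > 0"
  shows "norm (resolvent (op_scale c A) a - resolvent (op_scale c A) b) \<le> norm (a - b)"
proof -
  define p where "p = resolvent (op_scale c A) a"
  define q where "q = resolvent (op_scale c A) b"
  obtain u where u: "u \<in> A p" "a - p = c *\<^sub>R u"
    using maximal_monotone_resolvent_mem[OF mm c, of a] unfolding p_def op_scale_mem by blast
  obtain v where v: "v \<in> A q" "b - q = c *\<^sub>R v"
    using maximal_monotone_resolvent_mem[OF mm c, of b] unfolding q_def op_scale_mem by blast
  have "0 \<le> c * inner (u - v) (p - q)"
    using monotone_opD[OF maximal_monotone_imp_monotone[OF mm] u(1) v(1)] c by simp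
  also have "c * inner (u - v) (p - q) = inner ((a - b) - (p - q)) (p - q)"
    using u v by (simp add: algebra_simps inner_diff_left)
  finally have "inner (p - q) (p - q) \<le> inner (a - b) (p - q)"
    by (simp add: inner_diff_left)
  also have "\<dots> \<le> norm (a - b) * norm (p - q)"
    by (rule Cauchy_Schwarz_ineq2[THEN abs_le_D1])
  finally have "norm (p - q) * norm (p - q) \<le> norm (a - b) * norm (p - q)"
    by (simp add: dot_square_norm power2_eq_square)
  then show ?thesis
    unfolding p_def[symmetric] q_def[symmetric]
    by (cases "norm (p - q) = 0") (auto simp: mult_le_cancel_right)
qed

text \<open>The resolvent of \<eta>(F + G) is the fixed point of the contraction
  z \<mapsto> J_{\<eta>G}(x - \<eta> F z); the contraction constant is \<eta> L < 1.\<close>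

lemma resolvent_op_sum_mem:
  fixes F :: "'a::euclidean_space \<Rightarrow> 'a" and G :: "'a \<Rightarrow> 'a set"
  assumes mm: "maximal_monotone G" and lip: "L-lipschitz_on UNIV F"
    and \<eta>: "\<eta> > 0" and \<eta>L: "\<eta> * L < 1"
    and coh: "cohypomonotone \<rho> (op_sum F G)" and \<rho>_\<eta>: "\<rho> < \<eta>"
  defines "J \<equiv> resolvent (op_scale \<eta> (op_sum F G))"
  shows "x - J x \<in> op_scale \<eta> (op_sum F G) (J x)"
proof -
  define \<Phi> where "\<Phi> z = resolvent (op_scale \<eta> G) (x - \<eta> *\<^sub>R F z)" for z
  have "\<exists>!z. \<Phi> z = z"
  proof (rule banach_fix_type)
    show "0 \<le> \<eta> * L"
      using \<eta> lipschitz_on_nonneg[OF lip] by simp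
    show "\<forall>a b. dist (\<Phi> a) (\<Phi> b) \<le> \<eta> * L * dist a b"
    proof (intro allI)
      fix a b
      have "dist (\<Phi> a) (\<Phi> b) \<le> norm ((x - \<eta> *\<^sub>R F a) - (x - \<eta> *\<^sub>R F b))"
        unfolding \<Phi>_def dist_norm by (rule maximal_monotone_resolvent_nonexpansive[OF mm \<eta>])
      also have "\<dots> = \<eta> * dist (F a) (F b)"
        using \<eta> by (simp add: dist_norm norm_minus_commute flip: scaleR_diff_right)
      also have "\<dots> \<le> \<eta> * (L * dist a b)"
        using lipschitz_onD[OF lip] \<eta> by (intro mult_left_mono) auto
      finally show "dist (\<Phi> a) (\<Phi> b) \<le> \<eta> * L * dist a b"
        by simp
    qed
  qed (fact \<eta>L)
  then obtain z where z: "\<Phi> z = z" by blast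
  obtain v where v: "v \<in> G z" "x - \<eta> *\<^sub>R F z - z = \<eta> *\<^sub>R v"
    using maximal_monotone_resolvent_mem[OF mm \<eta>, of "x - \<eta> *\<^sub>R F z"] z
    unfolding \<Phi>_def op_scale_mem by auto
  have "x - z = \<eta> *\<^sub>R (F z + v)"
    using v(2) by (simp add: algebra_simps)
  then have z_mem: "x - z \<in> op_scale \<eta> (op_sum F G) z"
    using v(1) unfolding op_scale_mem by (intro bexI[of _ "F z + v"]) (auto simp: op_sum_mem)
  then show ?thesis
    unfolding J_def using cohypomonotone_resolvent_eqI[OF coh \<rho>_\<eta> z_mem] by simp
qed

lemma cohypomonotone_resolvent_residual_cocoercive:
  assumes coh: "cohypomonotone \<rho> A" and \<rho>_\<eta>: "\<rho> < \<eta>" and \<eta>: "\<eta> > 0"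
    and J: "\<And>x. x - J x \<in> op_scale \<eta> A (J x)"
  defines "g \<equiv> \<lambda>x. (1 - \<rho> / \<eta>) *\<^sub>R (x - J x)"
  shows "(norm (g x - g y))\<^sup>2 \<le> inner (g x - g y) (x - y)"
proof -
  obtain u where u: "u \<in> A (J x)" "x - J x = \<eta> *\<^sub>R u"
    using J[of x] by (auto simp: op_scale_mem)
  obtain v where v: "v \<in> A (J y)" "y - J y = \<eta> *\<^sub>R v"
    using J[of y] by (auto simp: op_scale_mem)
  have g_diff: "g x - g y = (\<eta> - \<rho>) *\<^sub>R (u - v)"
    unfolding g_def u(2) v(2) using \<eta> by (simp add: algebra_simps)
  have xy: "x - y = (J x - J y) + \<eta> *\<^sub>R (u - v)"
    using u v by (simp add: algebra_simps)
  have "(norm (g x - g y))\<^sup>2 = (\<eta> - \<rho>) * ((\<eta> - \<rho>) * (norm (u - v))\<^sup>2)"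
    unfolding g_diff using \<rho>_\<eta> by (simp add: power2_eq_square)
  also have "\<dots> \<le> (\<eta> - \<rho>) * (inner (u - v) (J x - J y) + \<eta> * (norm (u - v))\<^sup>2)"
    using cohypomonotoneD[OF coh u(1) v(1)] \<rho>_\<eta> by (intro mult_left_mono) (auto simp: algebra_simps)
  also have "\<dots> = inner (g x - g y) (x - y)"
    unfolding g_diff xy by (simp add: inner_add_right power2_norm_eq_inner algebra_simps)
  finally show ?thesis .
qed

section \<open>Tseng's forward-backward-forward method\<close>

text \<open>The core estimate of Tseng's method, with P, H, Q the errors of z_t, z_{t+1/2},
  z_{t+1} and d = z_{t+1} - z_{t+1/2} the correction step.\<close>

lemma tseng_descent_inequality:
  fixes P H Q d :: "'a::real_inner"
  assumes Q: "Q = H + d" and d: "norm d \<le> (1/2) * norm (P - H)"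
    and descent: "(m/2) * (norm H)\<^sup>2 \<le> inner (P - Q) H" and m: "0 < m"
  shows "(1 + 3*m/(m+3)) * (norm Q)\<^sup>2 \<le> (norm P)\<^sup>2"
proof -
  define h where "h = norm H"
  define r where "r = norm (P - H)"
  have "(norm d)\<^sup>2 \<le> (1/4) * r\<^sup>2"
    using d power_mono[OF d, of 2] unfolding r_def by (simp add: power_mult_distrib power2_eq_square)
  moreover have "(norm Q)\<^sup>2 = h\<^sup>2 + 2 * inner H d + (norm d)\<^sup>2"
    unfolding Q h_def by (simp add: power2_norm_eq_inner inner_add_left inner_add_right inner_commute)
  moreover have "(norm P)\<^sup>2 = r\<^sup>2 + 2 * inner (P - H) H + h\<^sup>2"
    unfolding r_def h_def
    by (simp add: power2_norm_eq_inner inner_diff_left inner_diff_right inner_commute)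
  moreover have "inner (P - Q) H = inner (P - H) H - inner H d"
    unfolding Q by (simp add: inner_diff_left inner_add_left inner_diff_right inner_add_right inner_commute)
  ultimately have descent': "(norm Q)\<^sup>2 \<le> (norm P)\<^sup>2 - m * h\<^sup>2 - (3/4) * r\<^sup>2"
    using descent unfolding h_def by linarith
  have "norm Q \<le> h + r/2"
    unfolding Q h_def r_def using norm_triangle_ineq[of H d] d by linarith
  then have "(norm Q)\<^sup>2 \<le> (h + r/2)\<^sup>2"
    by (intro power_mono) auto
  then have "(3*m/(m+3)) * (norm Q)\<^sup>2 \<le> (3*m/(m+3)) * (h + r/2)\<^sup>2"
    using m by (intro mult_left_mono) auto
  also have "\<dots> \<le> m * h\<^sup>2 + (3/4) * r\<^sup>2"
  proof -
    have "(m+3) * (m * h\<^sup>2 + (3/4) * r\<^sup>2) - 3*m*(h + r/2)\<^sup>2 = (m*h - 3/2*r)\<^sup>2"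
      by (simp add: power2_eq_square algebra_simps)
    then have "3*m*(h + r/2)\<^sup>2 \<le> (m+3) * (m * h\<^sup>2 + (3/4) * r\<^sup>2)"
      by (smt (verit) zero_le_power2)
    then show ?thesis
      using m by (simp add: divide_le_eq mult.commute)
  qed
  finally show ?thesis
    using descent' by (simp add: algebra_simps)
qed

definition fbf_update ::
  "('a::real_vector \<Rightarrow> 'a set) \<Rightarrow> ('a \<Rightarrow> 'a) \<Rightarrow> real \<Rightarrow> 'a \<Rightarrow> 'a \<Rightarrow> 'a" where
  "fbf_update A Bin LB z0 z = fst (fbf_step A Bin LB z0 (z, 0, 0))"

lemma fbf_step_eq: "fbf_step A Bin LB z0 (z, a, b) = (fbf_update A Bin LB z0 z, a + 2, b + 1)"
  by (simp add: fbf_step_def fbf_update_def Let_def)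

lemma fbf_eq_iterate: "fbf z0 N A Bin LB = ((fbf_update A Bin LB z0 ^^ N) z0, 2 * N, N)"
proof -
  have "(fbf_step A Bin LB z0 ^^ n) (z0, 0, 0) = ((fbf_update A Bin LB z0 ^^ n) z0, 2 * n, n)" for n
    by (induction n) (auto simp: fbf_step_eq)
  then show ?thesis
    by (simp add: fbf_def)
qed

lemma fbf_descent:
  fixes A :: "'a::real_inner \<Rightarrow> 'a set"
  assumes mono: "monotone_op A" and \<tau>: "\<tau> > 0"
    and strong: "\<And>a b. \<mu> * (norm (a - b))\<^sup>2 \<le> inner (B a - B b) (a - b)"
    and zh: "vh \<in> A zh" "z - \<tau> *\<^sub>R B z - zh = \<tau> *\<^sub>R vh"
    and zs: "- B zs \<in> A zs"
  defines "zn \<equiv> zh + \<tau> *\<^sub>R B z - \<tau> *\<^sub>R B zh"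
  shows "\<tau> * (\<mu> * (norm (zh - zs))\<^sup>2) \<le> inner (z - zn) (zh - zs)"
proof -
  have "\<tau> *\<^sub>R (vh - (- B zs)) = (z - zn) - \<tau> *\<^sub>R (B zh - B zs)"
    using zh(2) unfolding zn_def by (simp add: algebra_simps)
  then have "\<tau> * inner (vh - (- B zs)) (zh - zs)
      = inner (z - zn) (zh - zs) - \<tau> * inner (B zh - B zs) (zh - zs)"
    by (metis inner_diff_left inner_scaleR_left)
  moreover have "0 \<le> \<tau> * inner (vh - (- B zs)) (zh - zs)"
    using monotone_opD[OF mono zh(1) zs] \<tau> by simp
  moreover have "\<tau> * (\<mu> * (norm (zh - zs))\<^sup>2) \<le> \<tau> * inner (B zh - B zs) (zh - zs)"
    using strong \<tau> by (intro mult_left_mono) auto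
  ultimately show ?thesis
    by linarith
qed

lemma fbf_update_contraction:
  fixes A :: "'a::euclidean_space \<Rightarrow> 'a set"
  assumes mm: "maximal_monotone A" and lip: "LB-lipschitz_on UNIV Bin" and LB: "LB > 0"
    and strong: "\<And>a b. \<mu> * (norm (a - b))\<^sup>2 \<le> inner (Bin a - Bin b) (a - b)" and \<mu>: "\<mu> > 0"
    and sol: "z0 - Bin zs \<in> A zs"
  defines "m \<equiv> \<mu> / LB"
  shows "(1 + 3*m/(m+3)) * (norm (fbf_update A Bin LB z0 z - zs))\<^sup>2 \<le> (norm (z - zs))\<^sup>2"
proof -
  define \<tau> where "\<tau> = 1 / (2 * LB)"
  have \<tau>: "\<tau> > 0"
    unfolding \<tau>_def using LB by simp
  define B where "B w = Bin w - z0" for w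
  define zh where "zh = resolvent (op_scale \<tau> A) (z - \<tau> *\<^sub>R B z)"
  define zn where "zn = zh + \<tau> *\<^sub>R B z - \<tau> *\<^sub>R B zh"
  have zn_eq: "fbf_update A Bin LB z0 z = zn"
    unfolding fbf_update_def fbf_step_def zn_def zh_def B_def \<tau>_def Let_def by simp
  obtain vh where vh: "vh \<in> A zh" "z - \<tau> *\<^sub>R B z - zh = \<tau> *\<^sub>R vh"
    using maximal_monotone_resolvent_mem[OF mm \<tau>, of "z - \<tau> *\<^sub>R B z"]
    unfolding zh_def op_scale_mem by blast
  have "\<tau> * (\<mu> * (norm (zh - zs))\<^sup>2) \<le> inner (z - zn) (zh - zs)"
    unfolding zn_def
    by (rule fbf_descent[where B = B, OF maximal_monotone_imp_monotone[OF mm] \<tau> _ vh])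
       (use strong sol in \<open>auto simp: B_def\<close>)
  then have descent: "(m/2) * (norm (zh - zs))\<^sup>2 \<le> inner ((z - zs) - (zn - zs)) (zh - zs)"
    unfolding m_def \<tau>_def by simp
  have "norm (zn - zh) = \<tau> * norm (Bin z - Bin zh)"
    unfolding zn_def B_def using \<tau> by (simp flip: scaleR_diff_right)
  also have "\<dots> \<le> \<tau> * (LB * norm (z - zh))"
    using lipschitz_on_normD[OF lip] \<tau> by (intro mult_left_mono) auto
  also have "\<dots> = (1/2) * norm ((z - zs) - (zh - zs))"
    unfolding \<tau>_def using LB by simp
  finally have correction: "norm (zn - zh) \<le> (1/2) * norm ((z - zs) - (zh - zs))" .
  have "0 < m"
    unfolding m_def using \<mu> LB by simp
  from tseng_descent_inequality[OF _ correction descent this]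
  show ?thesis
    unfolding zn_eq by simp
qed

lemma funpow_contraction_bound:
  fixes S :: "'a::real_normed_vector \<Rightarrow> 'a"
  assumes q: "q \<ge> 0" and contraction: "\<And>z. q * (norm (S z - zs))\<^sup>2 \<le> (norm (z - zs))\<^sup>2"
  shows "q^n * (norm ((S^^n) z - zs))\<^sup>2 \<le> (norm (z - zs))\<^sup>2"
proof (induction n)
  case (Suc n)
  have "q^(Suc n) * (norm ((S^^Suc n) z - zs))\<^sup>2 = q^n * (q * (norm (S ((S^^n) z) - zs))\<^sup>2)"
    by simp
  also have "\<dots> \<le> q^n * (norm ((S^^n) z - zs))\<^sup>2"
    using contraction q by (intro mult_left_mono) auto
  also have "\<dots> \<le> (norm (z - zs))\<^sup>2"
    by (rule Suc.IH)
  finally show ?case .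
qed simp

lemma exp_half_le:
  fixes m :: real
  assumes m: "0 < m" "m \<le> 1"
  shows "exp (m/2) \<le> 1 + 3*m/(m+3)"
proof -
  have "exp (m/2) \<le> 1 + m/2 + (m/2)\<^sup>2"
    using m by (intro exp_bound) auto
  also have "\<dots> \<le> 1 + 3*m/(m+3)"
  proof -
    have "(m/2 + (m/2)\<^sup>2) * (m+3) = m * (m\<^sup>2 + 5*m + 6) / 4"
      by (simp add: power2_eq_square field_simps)
    also have "\<dots> \<le> m * 12 / 4"
    proof -
      have "m * m \<le> 1"
        using m by (intro mult_le_one) auto
      then have "m\<^sup>2 + 5*m + 6 \<le> 12"
        using m by (simp add: power2_eq_square)
      then show ?thesis
        using m by (intro divide_right_mono mult_left_mono) auto
    qed
    finally have "(m/2 + (m/2)\<^sup>2) * (m+3) \<le> 3*m"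
      by simp
    then show ?thesis
      using m by (simp add: le_divide_eq)
  qed
  finally show ?thesis .
qed

lemma tseng_iteration_count:
  fixes m R :: real
  assumes m: "0 < m" "m \<le> 1" and R: "R > 0" and N: "4 / m * ln R \<le> real N"
  shows "R\<^sup>2 \<le> (1 + 3*m/(m+3)) ^ N"
proof -
  have "m * (4 / m * ln R) \<le> m * real N"
    using N m by (intro mult_left_mono) auto
  then have "real 2 * ln R \<le> real N * (m/2)"
    using m by (simp add: mult.commute)
  then have "exp (real 2 * ln R) \<le> exp (real N * (m/2))"
    by (simp only: exp_le_cancel_iff)
  then have "R\<^sup>2 \<le> exp (m/2) ^ N"
    using R by (simp only: exp_of_nat_mult exp_ln)
  also have "\<dots> \<le> (1 + 3*m/(m+3)) ^ N"
    by (rule power_mono[OF exp_half_le[OF m]]) simp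
  finally show ?thesis .
qed

lemma fbf_error_bound:
  fixes A :: "'a::euclidean_space \<Rightarrow> 'a set"
  assumes mm: "maximal_monotone A" and lip: "LB-lipschitz_on UNIV Bin"
    and strong: "\<And>a b. \<mu> * (norm (a - b))\<^sup>2 \<le> inner (Bin a - Bin b) (a - b)"
    and \<mu>: "0 < \<mu>" "\<mu> \<le> LB"
    and sol: "z0 - Bin zs \<in> A zs"
    and N: "4 * LB / \<mu> * ln R \<le> real N" and R: "R > 0"
  shows "norm (fst (fbf z0 N A Bin LB) - zs) \<le> norm (z0 - zs) / R"
proof -
  define m where "m = \<mu> / LB"
  define q where "q = 1 + 3*m/(m+3)"
  define z where "z = (fbf_update A Bin LB z0 ^^ N) z0"
  have m: "0 < m" "m \<le> 1"
    unfolding m_def using \<mu> by (auto simp: divide_le_eq_1)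
  have contraction: "q * (norm (fbf_update A Bin LB z0 y - zs))\<^sup>2 \<le> (norm (y - zs))\<^sup>2" for y
    unfolding q_def m_def
    by (rule fbf_update_contraction[OF mm lip _ strong \<mu>(1) sol]) (use \<mu> in linarith)
  have q: "0 \<le> q"
    unfolding q_def using m by simp
  have "4 / m * ln R \<le> real N"
    using N unfolding m_def by simp
  then have "R\<^sup>2 \<le> q ^ N"
    unfolding q_def by (rule tseng_iteration_count[OF m R])
  then have "R\<^sup>2 * (norm (z - zs))\<^sup>2 \<le> q ^ N * (norm (z - zs))\<^sup>2"
    by (rule mult_right_mono) simp
  also have "\<dots> \<le> (norm (z0 - zs))\<^sup>2"
    unfolding z_def by (rule funpow_contraction_bound[OF q contraction])
  finally have "(R * norm (z - zs))\<^sup>2 \<le> (norm (z0 - zs))\<^sup>2"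
    by (simp only: power_mult_distrib)
  then have "R * norm (z - zs) \<le> norm (z0 - zs)"
    by (rule power2_le_imp_le) simp
  then show ?thesis
    by (simp add: fbf_eq_iterate z_def pos_le_divide_eq[OF R] mult.commute)
qed

section \<open>Inexact Halpern iteration\<close>

text \<open>The potential (a-1) a |g x|^2 + 2 a <g x, x - x0> of Halpern's iteration increases at
  most by the error terms in e.\<close>

lemma halpern_potential_step:
  fixes x0 x x' g g' e :: "'a::real_inner" and a :: real
  assumes a: "a > 0"
    and x': "x' = (1/(a+1)) *\<^sub>R x0 + (a/(a+1)) *\<^sub>R (x - g + e)"
    and coco: "(norm (g' - g))\<^sup>2 \<le> inner (g' - g) (x' - x)"
  shows "a*(a+1)*(norm g')\<^sup>2 + 2*(a+1)*inner g' (x' - x0)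
         \<le> (a-1)*a*(norm g)\<^sup>2 + 2*a*inner g (x - x0) + a*(a+1)*(norm e)\<^sup>2 + 2*a*norm g*norm e"
proof -
  define w where "w = x - x0"
  have ax': "(a+1) *\<^sub>R x' = x0 + a *\<^sub>R (x - g + e)"
    using a unfolding x' by (simp add: scaleR_add_right)
  have "(a+1) *\<^sub>R (x' - x) = - w - a *\<^sub>R g + a *\<^sub>R e" "(a+1) *\<^sub>R (x' - x0) = a *\<^sub>R (w - g + e)"
    unfolding scaleR_diff_right ax' w_def by (simp_all add: algebra_simps)
  then have step: "(a+1) * inner (g' - g) (x' - x) = inner (g' - g) (- w - a *\<^sub>R g + a *\<^sub>R e)"
    and anchor: "(a+1) * inner g' (x' - x0) = a * inner g' (w - g + e)"
    by (metis inner_scaleR_right)+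
  have "2*a*((a+1) * (norm (g' - g))\<^sup>2) \<le> 2*a*((a+1) * inner (g' - g) (x' - x))"
    using coco a by (intro mult_left_mono) auto
  moreover have "0 \<le> a*(a+1) * (norm (g' - g - e))\<^sup>2"
    using a by simp
  moreover have "2*a*inner g e \<le> 2*a*(norm g * norm e)"
    using a by (intro mult_left_mono Cauchy_Schwarz_ineq2[THEN abs_le_D1]) auto
  ultimately show ?thesis
    using anchor unfolding step w_def
    by (simp add: inner_diff_left inner_diff_right inner_add_left inner_add_right inner_commute
        power2_norm_eq_inner algebra_simps)
qed

lemma halpern_potential_step_relative_error:
  fixes x0 x x' g g' e :: "'a::real_inner" and a \<delta> :: real
  assumes a: "a \<ge> 1"
    and x': "x' = (1/(a+1)) *\<^sub>R x0 + (a/(a+1)) *\<^sub>R (x - g + e)"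
    and coco: "(norm (g' - g))\<^sup>2 \<le> inner (g' - g) (x' - x)"
    and e: "norm e \<le> \<delta> * norm g" and \<delta>: "\<delta> \<ge> 0"
  shows "a*(a+1)*(norm g')\<^sup>2 + 2*(a+1)*inner g' (x' - x0)
         \<le> (a-1)*a*(norm g)\<^sup>2 + 2*a*inner g (x - x0) + (2*\<delta>\<^sup>2 + 2*\<delta>/a) * (a * norm g)\<^sup>2"
proof -
  have "a*(a+1)*(norm e)\<^sup>2 \<le> a*(a+1)*(\<delta> * norm g)\<^sup>2"
    using e a by (intro mult_left_mono power_mono) auto
  also have "\<dots> \<le> 2*a\<^sup>2*(\<delta> * norm g)\<^sup>2"
  proof (rule mult_right_mono)
    show "a*(a+1) \<le> 2*a\<^sup>2"
      using a by (simp add: power2_eq_square algebra_simps)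
  qed simp
  finally have "a*(a+1)*(norm e)\<^sup>2 \<le> 2*\<delta>\<^sup>2 * (a * norm g)\<^sup>2"
    by (simp add: power_mult_distrib algebra_simps)
  moreover have "2*a*norm g*norm e \<le> 2*a*norm g*(\<delta> * norm g)"
    using e a by (intro mult_left_mono) auto
  moreover have "2*a*norm g*(\<delta> * norm g) = 2*\<delta>/a * (a * norm g)\<^sup>2"
    using a by (simp add: power2_eq_square field_simps)
  ultimately show ?thesis
    using halpern_potential_step[OF _ x' coco] a unfolding distrib_right by linarith
qed

lemma halpern_potential_lower_bound:
  fixes g :: "'a::real_inner \<Rightarrow> 'a" and x0 :: 'a and k :: nat
  assumes coco: "(norm (g x - g xs))\<^sup>2 \<le> inner (g x - g xs) (x - xs)" and zero: "g xs = 0"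
  defines "s \<equiv> (real k + 1) * norm (g x)" and "D \<equiv> norm (x0 - xs)"
  shows "s\<^sup>2 - 2 * D * s \<le> real k * (real k + 1) * (norm (g x))\<^sup>2 + 2 * (real k + 1) * inner (g x) (x - x0)"
proof -
  have "- inner (g x) (xs - x0) \<le> norm (g x) * D"
    using Cauchy_Schwarz_ineq2[of "g x" "xs - x0"] unfolding D_def
    by (simp add: norm_minus_commute)
  moreover have "inner (g x) (x - x0) = inner (g x) (x - xs) + inner (g x) (xs - x0)"
    by (simp add: inner_diff_right)
  moreover have "(norm (g x))\<^sup>2 \<le> inner (g x) (x - xs)"
    using coco zero by simp
  ultimately have "(norm (g x))\<^sup>2 - norm (g x) * D \<le> inner (g x) (x - x0)"
    by linarith
  then have "2 * (real k + 1) * ((norm (g x))\<^sup>2 - norm (g x) * D) \<le> 2 * (real k + 1) * inner (g x) (x - x0)"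
    by (intro mult_left_mono) auto
  moreover have "(real k + 1) * (real k + 2) * (norm (g x))\<^sup>2 - 2 * D * s
      = real k * (real k + 1) * (norm (g x))\<^sup>2 + 2 * (real k + 1) * ((norm (g x))\<^sup>2 - norm (g x) * D)"
    unfolding s_def by (simp add: algebra_simps power2_eq_square)
  moreover have "s\<^sup>2 \<le> (real k + 1) * (real k + 2) * (norm (g x))\<^sup>2"
  proof -
    have "s\<^sup>2 = ((real k + 1) * (real k + 1)) * (norm (g x))\<^sup>2"
      unfolding s_def by (simp add: power_mult_distrib power2_eq_square)
    also have "\<dots> \<le> ((real k + 1) * (real k + 2)) * (norm (g x))\<^sup>2"
      by (intro mult_right_mono mult_left_mono) auto
    finally show ?thesis .
  qed
  ultimately show ?thesis
    by linarith
qed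

lemma le_of_quadratic_le:
  fixes y d :: real
  assumes "0 \<le> y" "0 \<le> d" "y\<^sup>2 - 2*d*y \<le> 8*d\<^sup>2"
  shows "y \<le> 4*d"
proof (rule ccontr)
  assume "\<not> ?thesis"
  then have "0 < (y - 4*d) * (y + 2*d)"
    using assms by (intro mult_pos_pos) auto
  then show False
    using assms(3) by (simp add: power2_eq_square algebra_simps)
qed

text \<open>The bootstrap behind the O(1/k) rate: the bound s_j \<le> 4 D for j \<le> k keeps the growth
  of the potential V below 16 D^2 \<Sum>t_j \<le> 8 D^2, which in turn gives s_{k+1} \<le> 4 D.\<close>

lemma potential_bootstrap:
  fixes s V t :: "nat \<Rightarrow> real" and D :: real
  assumes D: "0 \<le> D" and s: "\<And>k. 0 \<le> s k" and t: "\<And>k. 0 \<le> t k"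
    and V_0: "V 0 = 0"
    and V_lower: "\<And>k. (s k)\<^sup>2 - 2 * D * s k \<le> V k"
    and V_Suc: "\<And>k. V (Suc k) \<le> V k + t k * (s k)\<^sup>2"
    and t_sum: "\<And>k. (\<Sum>j<k. t j) \<le> 1/2"
  shows "s k \<le> 4 * D"
proof -
  have bounded: "s k \<le> 4 * D" if "V k \<le> 8 * D\<^sup>2" for k
    using V_lower[of k] that D s by (intro le_of_quadratic_le) auto
  have t_sum': "16 * D\<^sup>2 * (\<Sum>j<k. t j) \<le> 8 * D\<^sup>2" for k
    using mult_left_mono[OF t_sum[of k], of "16 * D\<^sup>2"] by simp
  have V_bound: "V k \<le> 16 * D\<^sup>2 * (\<Sum>j<k. t j)" for k
  proof (induction k)
    case (Suc k)
    have "V k \<le> 8 * D\<^sup>2"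
      using Suc.IH t_sum'[of k] by linarith
    then have "(s k)\<^sup>2 \<le> (4 * D)\<^sup>2"
      using bounded s by (intro power_mono) auto
    then have "t k * (s k)\<^sup>2 \<le> t k * (16 * D\<^sup>2)"
      using t by (intro mult_left_mono) (auto simp: power_mult_distrib)
    then show ?case
      using V_Suc[of k] Suc.IH by (simp add: algebra_simps)
  qed (simp add: V_0)
  have "V k \<le> 8 * D\<^sup>2"
    using V_bound[of k] t_sum'[of k] by linarith
  then show ?thesis
    by (rule bounded)
qed

lemma inexact_halpern_rate:
  fixes g :: "'a::real_inner \<Rightarrow> 'a" and X e :: "nat \<Rightarrow> 'a" and \<delta> :: "nat \<Rightarrow> real"
  assumes coco: "\<And>x y. (norm (g x - g y))\<^sup>2 \<le> inner (g x - g y) (x - y)"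
    and zero: "g xs = 0"
    and X_0: "X 0 = x0"
    and X_Suc: "\<And>k. X (Suc k) = (1 / (real k + 2)) *\<^sub>R x0
                  + ((real k + 1) / (real k + 2)) *\<^sub>R (X k - g (X k) + e k)"
    and err: "\<And>k. norm (e k) \<le> \<delta> k * norm (g (X k))"
    and \<delta>_nonneg: "\<And>k. 0 \<le> \<delta> k"
    and \<delta>_sum: "\<And>k. (\<Sum>j<k. 2 * (\<delta> j)\<^sup>2 + 2 * \<delta> j / (real j + 1)) \<le> 1/2"
  shows "(real k + 1) * norm (g (X k)) \<le> 4 * norm (x0 - xs)"
proof -
  define V where "V k = real k * (real k + 1) * (norm (g (X k)))\<^sup>2
                        + 2 * (real k + 1) * inner (g (X k)) (X k - x0)" for k
  show ?thesis
  proof (rule potential_bootstrap[where V = V and D = "norm (x0 - xs)"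
        and s = "\<lambda>k. (real k + 1) * norm (g (X k))"
        and t = "\<lambda>k. 2 * (\<delta> k)\<^sup>2 + 2 * \<delta> k / (real k + 1)"])
    show "V 0 = 0"
      unfolding V_def X_0 by simp
    show "((real k + 1) * norm (g (X k)))\<^sup>2 - 2 * norm (x0 - xs) * ((real k + 1) * norm (g (X k)))
        \<le> V k" for k
      unfolding V_def using coco zero by (rule halpern_potential_lower_bound)
    show "V (Suc k) \<le> V k + (2 * (\<delta> k)\<^sup>2 + 2 * \<delta> k / (real k + 1)) * ((real k + 1) * norm (g (X k)))\<^sup>2"
      for k
    proof -
      have "X (Suc k) = (1/((real k + 1) + 1)) *\<^sub>R x0
          + ((real k + 1)/((real k + 1) + 1)) *\<^sub>R (X k - g (X k) + e k)"
        using X_Suc[of k] by (simp add: add.assoc)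
      from halpern_potential_step_relative_error[OF _ this coco[of "X (Suc k)" "X k"] err \<delta>_nonneg]
      show ?thesis
        unfolding V_def by (simp add: algebra_simps)
    qed
  qed (use \<delta>_nonneg \<delta>_sum in auto)
qed

lemma sum_inverse_squares_le: "(\<Sum>j<k. 1/(real j + 1)\<^sup>2) \<le> 2 - 2/(real k + 1)"
proof (induction k)
  case (Suc k)
  define a where "a = real k + 1"
  have a: "a \<ge> 1"
    unfolding a_def by simp
  have "1/a\<^sup>2 = 2/(2*a*a)"
    by (simp add: power2_eq_square)
  also have "\<dots> \<le> 2/(a*(a+1))"
  proof (rule frac_le)
    show "0 < a*(a+1)"
      using a by simp
    show "a*(a+1) \<le> 2*a*a"
      using a by (simp add: algebra_simps)
  qed auto
  also have "2/(a*(a+1)) = 2/a - 2/(a+1)"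
    using a by (simp add: field_simps)
  finally have "1/(real k + 1)\<^sup>2 \<le> 2/(real k + 1) - 2/(real k + 2)"
    unfolding a_def by (simp add: add.assoc)
  with Suc show ?case
    by (simp add: add.commute)
qed simp

lemma inverse_n_ln_squared_le_telescoping:
  fixes n :: real
  assumes n: "n \<ge> 3"
  shows "1/(n * (ln n)\<^sup>2) \<le> 1/ln (n-1) - 1/ln n"
proof -
  have ln_pos: "ln (n-1) > 0" "ln n > 0"
    using n by simp_all
  have "ln ((n-1)/n) \<le> (n-1)/n - 1"
    using n by (intro ln_le_minus_one) auto
  also have "(n-1)/n - 1 = - 1/n"
    using n by (simp add: field_simps)
  finally have ln_diff: "1/n \<le> ln n - ln (n-1)"
    using n by (simp add: ln_div)
  have "1/(n * (ln n)\<^sup>2) = (1/n) / (ln n * ln n)"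
    by (simp add: power2_eq_square)
  also have "\<dots> \<le> (ln n - ln (n-1)) / (ln n * ln n)"
    using ln_diff ln_pos by (intro divide_right_mono) auto
  also have "\<dots> \<le> (ln n - ln (n-1)) / (ln (n-1) * ln n)"
    using ln_diff ln_pos n by (intro divide_left_mono mult_right_mono) auto
  also have "\<dots> = 1/ln (n-1) - 1/ln n"
    using ln_pos by (simp add: field_simps)
  finally show ?thesis .
qed

lemma sum_inverse_n_ln_squared_le: "(\<Sum>j<k. 1/((real j + 2) * (ln (real j + 2))\<^sup>2)) \<le> 3"
proof -
  have telescoped: "(\<Sum>j<k. 1/((real j + 2) * (ln (real j + 2))\<^sup>2))
      \<le> 1/(2*(ln 2)\<^sup>2) + 1/ln 2 - 1/ln (real k + 1)" if "k \<ge> 1" for k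
    using that
  proof (induction k rule: dec_induct)
    case (step k)
    have "1/((real k + 2) * (ln (real k + 2))\<^sup>2) \<le> 1/ln (real k + 2 - 1) - 1/ln (real k + 2)"
      using step by (intro inverse_n_ln_squared_le_telescoping) auto
    with step show ?case
      by (simp add: add.commute add.left_commute)
  qed simp
  have ln2: "2/3 \<le> ln (2::real)"
    by (rule ln2_ge_two_thirds)
  then have ln2_inverse: "1/ln (2::real) \<le> 3/2"
    by (simp add: divide_le_eq)
  have ln2_inverse_square: "1/(2*(ln (2::real))\<^sup>2) \<le> 9/8"
  proof -
    have "(2/3)\<^sup>2 \<le> (ln (2::real))\<^sup>2"
      using ln2 by (intro power_mono) auto
    then show ?thesis
      by (simp add: divide_le_eq power2_eq_square)
  qed
  show ?thesis
  proof (cases "k = 0")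
    case False
    then have "0 \<le> 1/ln (real k + 1)"
      by simp
    with telescoped[of k] False ln2_inverse ln2_inverse_square show ?thesis
      by linarith
  qed simp
qed

text \<open>The relative accuracy 1/(98 sqrt(j+2) ln(j+2)) that N_j FBF steps guarantee is small
  enough for the inexact Halpern iteration.\<close>

lemma halpern_tolerance_sum_le:
  "(\<Sum>j<k. 2 * (1/(98 * sqrt (real j + 2) * ln (real j + 2)))\<^sup>2
            + 2 * (1/(98 * sqrt (real j + 2) * ln (real j + 2))) / (real j + 1)) \<le> 1/2"
proof -
  define r where "r j = 1/(98 * sqrt (real j + 2) * ln (real j + 2))" for j :: nat
  have r_sq: "(r j)\<^sup>2 = (1/9604) * (1/((real j + 2) * (ln (real j + 2))\<^sup>2))" for j
    unfolding r_def by (simp add: power_mult_distrib power_divide)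
  have young: "2*x*y \<le> 50*x\<^sup>2 + (1/50)*y\<^sup>2" for x y :: real
  proof -
    have "0 \<le> (50*x - y)\<^sup>2"
      by simp
    then show ?thesis
      by (simp add: power2_eq_square algebra_simps)
  qed
  have "2 * (r j)\<^sup>2 + 2 * r j / (real j + 1) \<le> 52 * (r j)\<^sup>2 + (1/50) * (1/(real j + 1)\<^sup>2)" for j
    using young[of "r j" "1/(real j + 1)"] by (simp add: power_divide)
  then have "(\<Sum>j<k. 2 * (r j)\<^sup>2 + 2 * r j / (real j + 1))
      \<le> (\<Sum>j<k. 52 * (r j)\<^sup>2 + (1/50) * (1/(real j + 1)\<^sup>2))"
    by (rule sum_mono)
  also have "\<dots> = (52/9604) * (\<Sum>j<k. 1/((real j + 2) * (ln (real j + 2))\<^sup>2))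
                   + (1/50) * (\<Sum>j<k. 1/(real j + 1)\<^sup>2)"
    unfolding r_sq by (simp add: sum.distrib sum_distrib_left)
  also have "\<dots> \<le> (52/9604) * 3 + (1/50) * 2"
  proof -
    have "0 \<le> 2/(real k + 1)"
      by simp
    then have "(\<Sum>j<k. 1/(real j + 1)\<^sup>2) \<le> 2"
      using sum_inverse_squares_le[of k] by linarith
    then show ?thesis
      using sum_inverse_n_ln_squared_le[of k] by (intro add_mono mult_left_mono) auto
  qed
  also have "\<dots> \<le> 1/2"
    by simp
  finally show ?thesis
    unfolding r_def .
qed

section \<open>The inexact Halpern method with FBF inner loops\<close>

lemma halpern_Suc_perturbed:
  fixes F :: "'a::real_vector \<Rightarrow> 'a" and G :: "'a \<Rightarrow> 'a set"
    and L \<eta> \<rho> :: real and x0 y :: 'a and k :: nat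
  defines "x \<equiv> halpern F G L \<eta> \<rho> x0 k" and "\<alpha> \<equiv> 1 - \<rho> / \<eta>"
  shows "halpern F G L \<eta> \<rho> x0 (Suc k) = (1 / (real k + 2)) *\<^sub>R x0
           + ((real k + 1) / (real k + 2)) *\<^sub>R
               (x - \<alpha> *\<^sub>R (x - y) + \<alpha> *\<^sub>R (fst (inexact_resolvent F G L \<eta> k x) - y))"
proof -
  have "halpern F G L \<eta> \<rho> x0 (Suc k) = (1 / (real k + 2)) *\<^sub>R x0
      + (1 - 1 / (real k + 2)) *\<^sub>R ((1 - \<alpha>) *\<^sub>R x + \<alpha> *\<^sub>R fst (inexact_resolvent F G L \<eta> k x))"
    unfolding x_def \<alpha>_def by (simp only: halpern.simps Let_def)
  moreover have "1 - 1 / (real k + 2) = (real k + 1) / (real k + 2)"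
    by (simp add: field_simps)
  moreover have "(1 - \<alpha>) *\<^sub>R x + \<alpha> *\<^sub>R fst (inexact_resolvent F G L \<eta> k x)
      = x - \<alpha> *\<^sub>R (x - y) + \<alpha> *\<^sub>R (fst (inexact_resolvent F G L \<eta> k x) - y)"
    by (simp add: algebra_simps)
  ultimately show ?thesis
    by simp
qed

lemma inexact_resolvent_counts:
  "fst (snd (inexact_resolvent F G L \<eta> k x)) = 2 * halpern_N L \<eta> k"
  "snd (snd (inexact_resolvent F G L \<eta> k x)) = halpern_N L \<eta> k"
  by (simp_all add: inexact_resolvent_def fbf_eq_iterate)

lemma inexact_resolvent_error:
  fixes F :: "'a::euclidean_space \<Rightarrow> 'a" and G :: "'a \<Rightarrow> 'a set"
  assumes mm: "maximal_monotone G" and lip: "L-lipschitz_on UNIV F"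
    and \<eta>: "\<eta> > 0" and \<eta>L: "\<eta> * L < 1"
    and coh: "cohypomonotone \<rho> (op_sum F G)" and \<rho>_\<eta>: "\<rho> < \<eta>"
  defines "J \<equiv> resolvent (op_scale \<eta> (op_sum F G))"
  shows "norm (fst (inexact_resolvent F G L \<eta> k x) - J x)
           \<le> norm (x - J x) / (98 * sqrt (real k + 2) * ln (real k + 2))"
  unfolding inexact_resolvent_def
proof (rule fbf_error_bound)
  have L: "0 \<le> L"
    using lip by (rule lipschitz_on_nonneg)
  show "maximal_monotone (op_scale \<eta> G)"
    using mm \<eta> by (rule maximal_monotone_op_scale)
  show "(1 + \<eta> * L)-lipschitz_on UNIV (\<lambda>z. z + \<eta> *\<^sub>R F z)"
    using \<eta> by (intro lipschitz_on_add lipschitz_on_id lipschitz_on_cmult_nonneg lip) simp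
  show "(1 - \<eta> * L) * (norm (a - b))\<^sup>2 \<le> inner ((a + \<eta> *\<^sub>R F a) - (b + \<eta> *\<^sub>R F b)) (a - b)" for a b
    using lip \<eta> by (intro id_plus_lipschitz_strongly_monotone) auto
  show "0 < 1 - \<eta> * L" "1 - \<eta> * L \<le> 1 + \<eta> * L"
    using \<eta>L \<eta> L by auto
  obtain v where "v \<in> G (J x)" "x - J x = \<eta> *\<^sub>R (F (J x) + v)"
    using resolvent_op_sum_mem[OF mm lip \<eta> \<eta>L coh \<rho>_\<eta>, of x]
    unfolding J_def by (auto simp: op_scale_mem op_sum_mem)
  then show "x - (J x + \<eta> *\<^sub>R F (J x)) \<in> op_scale \<eta> G (J x)"
    unfolding op_scale_mem by (intro bexI[of _ v]) (auto simp: algebra_simps)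
  show "4 * (1 + \<eta> * L) / (1 - \<eta> * L) * ln (98 * sqrt (real k + 2) * ln (real k + 2))
          \<le> real (halpern_N L \<eta> k)"
    unfolding halpern_N_def by (rule real_nat_ceiling_ge)
  show "0 < 98 * sqrt (real k + 2) * ln (real k + 2)"
    by simp
qed

lemma scaled_rate_squared:
  fixes n D \<eta> \<rho> :: real and k :: nat
  assumes bound: "(real k + 1) * ((\<eta> - \<rho>) / \<eta> * n) \<le> 4 * D"
    and \<rho>: "0 \<le> \<rho>" "\<rho> < \<eta>" and n: "0 \<le> n"
  shows "(1 / \<eta>\<^sup>2) * n\<^sup>2 \<le> 16 * D\<^sup>2 / ((\<eta> - \<rho>)\<^sup>2 * (real k + 1)\<^sup>2)"
proof -
  have "(real k + 1) * (\<eta> - \<rho>) * n \<le> 4 * D * \<eta>"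
    using bound \<rho> by (simp add: field_simps)
  then have "((real k + 1) * (\<eta> - \<rho>) * n)\<^sup>2 \<le> (4 * D * \<eta>)\<^sup>2"
    using \<rho> n by (intro power_mono) auto
  then have "n\<^sup>2 * ((\<eta> - \<rho>)\<^sup>2 * (real k + 1)\<^sup>2) \<le> 16 * D\<^sup>2 * \<eta>\<^sup>2"
    by (simp add: power_mult_distrib mult_ac)
  then show ?thesis
    using \<rho> by (simp add: field_simps)
qed

lemma inexact_halpern_residual_rate:
  fixes F :: "'a::euclidean_space \<Rightarrow> 'a" and G :: "'a \<Rightarrow> 'a set" and x0 :: 'a and k :: nat
  assumes mm: "maximal_monotone G" and lip: "L-lipschitz_on UNIV F"
    and coh: "cohypomonotone \<rho> (op_sum F G)" and \<eta>L: "\<eta> * L < 1"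
    and \<rho>: "0 \<le> \<rho>" "\<rho> < \<eta>" and xstar: "0 \<in> op_sum F G xstar"
  defines "x \<equiv> halpern F G L \<eta> \<rho> x0 k"
  shows "(1 / \<eta>\<^sup>2) * (norm (x - resolvent (op_scale \<eta> (op_sum F G)) x))\<^sup>2
           \<le> 16 * (norm (x0 - xstar))\<^sup>2 / ((\<eta> - \<rho>)\<^sup>2 * (real k + 1)\<^sup>2)"
proof -
  have \<eta>: "\<eta> > 0"
    using \<rho> by simp
  have \<alpha>: "0 \<le> 1 - \<rho> / \<eta>"
    using \<rho> by simp
  define J where "J = resolvent (op_scale \<eta> (op_sum F G))"
  define X where "X = halpern F G L \<eta> \<rho> x0"
  define R where "R k = 98 * sqrt (real k + 2) * ln (real k + 2)" for k :: nat
  define g where "g x = (1 - \<rho> / \<eta>) *\<^sub>R (x - J x)" for x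
  define e where "e k = (1 - \<rho> / \<eta>) *\<^sub>R (fst (inexact_resolvent F G L \<eta> k (X k)) - J (X k))" for k
  have J_mem: "x - J x \<in> op_scale \<eta> (op_sum F G) (J x)" for x
    unfolding J_def by (rule resolvent_op_sum_mem[OF mm lip \<eta> \<eta>L coh \<rho>(2)])
  have J_xstar: "J xstar = xstar"
    unfolding J_def using xstar
    by (intro cohypomonotone_resolvent_eqI[OF coh \<rho>(2)]) (force simp: op_scale_mem)
  have "(real k + 1) * norm (g (X k)) \<le> 4 * norm (x0 - xstar)"
  proof (rule inexact_halpern_rate[where g = g and X = X and e = e and \<delta> = "\<lambda>k. 1 / R k"])
    show "(norm (g x - g y))\<^sup>2 \<le> inner (g x - g y) (x - y)" for x y
      unfolding g_def using coh \<rho>(2) \<eta> J_mem by (rule cohypomonotone_resolvent_residual_cocoercive)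
    show "X (Suc k) = (1 / (real k + 2)) *\<^sub>R x0 + ((real k + 1) / (real k + 2)) *\<^sub>R (X k - g (X k) + e k)" for k
      unfolding X_def g_def e_def by (rule halpern_Suc_perturbed)
    show "norm (e k) \<le> 1 / R k * norm (g (X k))" for k
      using mult_left_mono[OF inexact_resolvent_error[OF mm lip \<eta> \<eta>L coh \<rho>(2), of k "X k"] \<alpha>]
      unfolding e_def g_def J_def R_def by (simp add: abs_of_nonneg[OF \<alpha>])
    show "(\<Sum>j<k. 2 * (1 / R j)\<^sup>2 + 2 * (1 / R j) / (real j + 1)) \<le> 1/2" for k
      unfolding R_def by (rule halpern_tolerance_sum_le)
  qed (auto simp: g_def X_def R_def J_xstar)
  moreover have "norm (g (X k)) = (\<eta> - \<rho>) / \<eta> * norm (x - J x)"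
    unfolding g_def X_def x_def using \<rho> \<eta> by (simp add: diff_divide_distrib)
  ultimately show ?thesis
    unfolding J_def using \<rho> by (intro scaled_rate_squared) auto
qed

theorem theorem2p1:
  fixes F :: "'a::euclidean_space \<Rightarrow> 'a" and G :: "'a \<Rightarrow> 'a set"
    and L \<eta> \<rho> :: real and x0 xstar :: 'a and K :: nat
  assumes F_lip: "L-lipschitz_on UNIV F"
    and G_mm: "maximal_monotone G"
    and sol_nonempty: "\<exists>x. 0 \<in> op_sum F G x"
    and rho_pos: "\<rho> > 0"
    and cohypo: "maximal_cohypomonotone \<rho> (op_sum F G)"
    and eta_L: "\<eta> * L < 1"
    and rho_eta: "\<rho> < \<eta>"
    and xstar: "0 \<in> op_sum F G xstar"
    and K: "K \<ge> 1"
  shows "(\<forall>k. 1 \<le> k \<and> k \<le> K \<longrightarrow>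
            (1 / \<eta>\<^sup>2) * (norm (halpern F G L \<eta> \<rho> x0 k
                 - resolvent (op_scale \<eta> (op_sum F G)) (halpern F G L \<eta> \<rho> x0 k)))\<^sup>2
            \<le> 16 * (norm (x0 - xstar))\<^sup>2 / ((\<eta> - \<rho>)\<^sup>2 * (real k + 1)\<^sup>2))
       \<and> (\<forall>k < K.
            fst (snd (inexact_resolvent F G L \<eta> k (halpern F G L \<eta> \<rho> x0 k))) \<le> 2 * halpern_N L \<eta> k
          \<and> snd (snd (inexact_resolvent F G L \<eta> k (halpern F G L \<eta> \<rho> x0 k))) \<le> 2 * halpern_N L \<eta> k)"
proof -
  have coh: "cohypomonotone \<rho> (op_sum F G)"
    using cohypo by (simp add: maximal_cohypomonotone_def)
  show ?thesis
    using inexact_halpern_residual_rate[OF G_mm F_lip coh eta_L less_imp_le[OF rho_pos] rho_eta xstar]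
    by (simp add: inexact_resolvent_counts)
qed

end
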